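(* Let $D\subset\mathbb{C}^n$ be a bounded homogeneous domain with $0\in D$, let $\mu:D\to(0,\infty)$ be a weight, let $\psi\in H(D)$ and let $\varphi$ be a holomorphic self-map of $D$. If the weighted composition operator $W_{\psi,\varphi}:\mathcal{B}(D)\to H^\infty_\mu(D)$, $W_{\psi,\varphi}f=\psi\,(f\circ\varphi)$, is bounded, then $$\upsilon_{0,\mu}(\psi,\varphi)\le \upsilon_\mu(\psi,\varphi)\le \|W_{\psi,\varphi}\|,$$ where $\upsilon_\mu(\psi,\varphi)=\sup_{z\in D}\mu(z)|\psi(z)|\,\omega(\varphi(z))$ and $\upsilon_{0,\mu}(\psi,\varphi)=\sup_{z\in D}\mu(z)|\psi(z)|\,\omega_0(\varphi(z))$.
   Context: $H(D)$ denotes the holomorphic functions $D\to\mathbb{C}$. A domain is homogeneous if its group of biholomorphic automorphisms acts transitively. A weight is a continuous strictly positive function $\mu:D\to(0,\infty)$; $H^\infty_\mu(D)=\{f\in H(D):\|f\|_{H^\infty_\mu}=\sup_{z\in D}\mu(z)|f(z)|<\infty\}$. For $f\in H(D)$ and $z\in D$, $Q_f(z)=\sup_{u\in\mathbb{C}^n\setminus\{0\}}\frac{|\nabla f(z)u|}{H_z(u,\bar u)^{1/2}}$, where $\nabla f(z)u=\sum_k \frac{\partial f}{\partial z_k}(z)u_k$ and $H_z$ is the Bergman metric of $D$ at $z$. The Bloch space is $\mathcal{B}(D)=\{f\in H(D):\beta_f=\sup_{z\in D}Q_f(z)<\infty\}$ with norm $\|f\|_{\mathcal{B}}=|f(0)|+\beta_f$.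 The $*$-little Bloch space is $\mathcal{B}_{0*}(D)=\{f\in\mathcal{B}(D):\lim_{z\to\partial^* D}Q_f(z)=0\}$, where $\partial^*D$ is the distinguished boundary of $D$. For $z\in D$: $\omega(z)=\sup\{|f(z)|: f\in\mathcal{B}(D), f(0)=0, \|f\|_{\mathcal{B}}\le 1\}$ and $\omega_0(z)=\sup\{|f(z)|: f\in\mathcal{B}_{0*}(D), f(0)=0, \|f\|_{\mathcal{B}}\le 1\}$ (both are finite). *)

theory Defs
  imports "HOL-Analysis.Analysis"
begin

definition holo :: "(complex^'n \<Rightarrow> complex) \<Rightarrow> (complex^'n) set \<Rightarrow> bool" where
  "holo f D \<longleftrightarrow> (\<forall>z\<in>D. \<exists>L. (f has_derivative L) (at z) \<and> (\<forall>c v. L (c *s v) = c * L v))"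

definition holo_map :: "(complex^'n \<Rightarrow> complex^'m) \<Rightarrow> (complex^'n) set \<Rightarrow> bool" where
  "holo_map F D \<longleftrightarrow> (\<forall>i. holo (\<lambda>z. F z $ i) D)"

definition biholo_auto :: "(complex^'n \<Rightarrow> complex^'n) \<Rightarrow> (complex^'n) set \<Rightarrow> bool" where
  "biholo_auto F D \<longleftrightarrow> bij_betw F D D \<and> holo_map F D \<and> holo_map (inv_into D F) D"

definition homogeneous_domain :: "(complex^'n) set \<Rightarrow> bool" where
  "homogeneous_domain D \<longleftrightarrow> open D \<and> connected D \<and> D \<noteq> {} \<and>
     (\<forall>z\<in>D. \<forall>w\<in>D. \<exists>F. biholo_auto F D \<and> F z = w)"

text \<open>Bergman kernel on the diagonal, K(z,z) = sup of |f(z)|^2 over the unit ball of the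
  Bergman space A^2(D) (Lebesgue measure; normalisation irrelevant for the metric).\<close>
definition bergman_diag :: "(complex^'n) set \<Rightarrow> complex^'n \<Rightarrow> real" where
  "bergman_diag D z = Sup {(cmod (f z))^2 | f. holo f D \<and>
       (\<lambda>w. (cmod (f w))^2) integrable_on D \<and> integral D (\<lambda>w. (cmod (f w))^2) \<le> 1}"

text \<open>Bergman metric H_z(u,conj u) = sum_{j,k} d^2 log K(z,z)/dz_j d conj(z_k) u_j conj(u_k),
  written out as (1/4) times the Laplacian of lambda |-> log K(z + lambda u, z + lambda u) at 0.\<close>
definition bergman_metric :: "(complex^'n) set \<Rightarrow> complex^'n \<Rightarrow> complex^'n \<Rightarrow> real" where
  "bergman_metric D z u =
     (let g = (\<lambda>w. ln (bergman_diag D w)) in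
       (deriv (deriv (\<lambda>t::real. g (z + (complex_of_real t) *s u))) 0 +
        deriv (deriv (\<lambda>t::real. g (z + (\<i> * complex_of_real t) *s u))) 0) / 4)"

definition Qf :: "(complex^'n) set \<Rightarrow> (complex^'n \<Rightarrow> complex) \<Rightarrow> complex^'n \<Rightarrow> real" where
  "Qf D f z = Sup {cmod (frechet_derivative f (at z) u) / sqrt (bergman_metric D z u) | u. u \<noteq> 0}"

definition bloch_space :: "(complex^'n) set \<Rightarrow> (complex^'n \<Rightarrow> complex) set" where
  "bloch_space D = {f. holo f D \<and> bdd_above (Qf D f ` D)}"

definition bloch_seminorm :: "(complex^'n) set \<Rightarrow> (complex^'n \<Rightarrow> complex) \<Rightarrow> real" where
  "bloch_seminorm D f = (SUP z\<in>D. Qf D f z)"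

definition bloch_norm :: "(complex^'n) set \<Rightarrow> (complex^'n \<Rightarrow> complex) \<Rightarrow> real" where
  "bloch_norm D f = cmod (f 0) + bloch_seminorm D f"

definition distinguished_boundary :: "(complex^'n) set \<Rightarrow> (complex^'n) set" where
  "distinguished_boundary D = \<Inter> {S. closed S \<and> S \<subseteq> closure D \<and>
       (\<forall>f. continuous_on (closure D) f \<and> holo f D \<longrightarrow>
            (\<forall>x\<in>closure D. \<exists>y\<in>S. cmod (f x) \<le> cmod (f y)))}"

definition little_bloch_star :: "(complex^'n) set \<Rightarrow> (complex^'n \<Rightarrow> complex) set" where
  "little_bloch_star D = {f \<in> bloch_space D.
       \<forall>\<xi>\<in>distinguished_boundary D. ((\<lambda>z. Qf D f z) \<longlongrightarrow> 0) (at \<xi> within D)}"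

definition omega :: "(complex^'n) set \<Rightarrow> complex^'n \<Rightarrow> real" where
  "omega D z = Sup {cmod (f z) | f. f \<in> bloch_space D \<and> f 0 = 0 \<and> bloch_norm D f \<le> 1}"

definition omega0 :: "(complex^'n) set \<Rightarrow> complex^'n \<Rightarrow> real" where
  "omega0 D z = Sup {cmod (f z) | f. f \<in> little_bloch_star D \<and> f 0 = 0 \<and> bloch_norm D f \<le> 1}"

definition hinf_norm :: "(complex^'n) set \<Rightarrow> (complex^'n \<Rightarrow> real) \<Rightarrow> (complex^'n \<Rightarrow> complex) \<Rightarrow> real" where
  "hinf_norm D \<mu> f = (SUP z\<in>D. \<mu> z * cmod (f z))"

definition wco_bounded ::
  "(complex^'n) set \<Rightarrow> (complex^'n \<Rightarrow> real) \<Rightarrow> (complex^'n \<Rightarrow> complex) \<Rightarrow> (complex^'n \<Rightarrow> complex^'n) \<Rightarrow> bool" where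
  "wco_bounded D \<mu> \<psi> \<phi> \<longleftrightarrow> (\<exists>C. \<forall>f\<in>bloch_space D.
      bdd_above ((\<lambda>z. \<mu> z * cmod (\<psi> z * f (\<phi> z))) ` D) \<and>
      hinf_norm D \<mu> (\<lambda>z. \<psi> z * f (\<phi> z)) \<le> C * bloch_norm D f)"

definition wco_norm ::
  "(complex^'n) set \<Rightarrow> (complex^'n \<Rightarrow> real) \<Rightarrow> (complex^'n \<Rightarrow> complex) \<Rightarrow> (complex^'n \<Rightarrow> complex^'n) \<Rightarrow> real" where
  "wco_norm D \<mu> \<psi> \<phi> = Sup {hinf_norm D \<mu> (\<lambda>z. \<psi> z * f (\<phi> z)) | f. f \<in> bloch_space D \<and> bloch_norm D f \<le> 1}"

definition upsilon ::
  "(complex^'n) set \<Rightarrow> (complex^'n \<Rightarrow> real) \<Rightarrow> (complex^'n \<Rightarrow> complex) \<Rightarrow> (complex^'n \<Rightarrow> complex^'n) \<Rightarrow> real" where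
  "upsilon D \<mu> \<psi> \<phi> = (SUP z\<in>D. \<mu> z * cmod (\<psi> z) * omega D (\<phi> z))"

definition upsilon0 ::
  "(complex^'n) set \<Rightarrow> (complex^'n \<Rightarrow> real) \<Rightarrow> (complex^'n \<Rightarrow> complex) \<Rightarrow> (complex^'n \<Rightarrow> complex^'n) \<Rightarrow> real" where
  "upsilon0 D \<mu> \<psi> \<phi> = (SUP z\<in>D. \<mu> z * cmod (\<psi> z) * omega0 D (\<phi> z))"

end

theory Submission
  imports Defs
begin

text \<open>For f in the closed unit ball of \<open>\<B>(D)\<close>, the function \<open>W\<^sub>\<psi>\<^sub>,\<^sub>\<phi> f\<close> lies in the ball of
  radius \<open>\<parallel>W\<^sub>\<psi>\<^sub>,\<^sub>\<phi>\<parallel>\<close> of \<open>H\<^sup>\<infinity>\<^sub>\<mu>(D)\<close>, so \<open>\<mu>(z) |\<psi>(z)| |f(\<phi>(z))| \<le> \<parallel>W\<^sub>\<psi>\<^sub>,\<^sub>\<phi>\<parallel>\<close> at every point z.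
  Taking the supremum over those f with \<open>f(0) = 0\<close> gives \<open>\<mu>(z) |\<psi>(z)| \<omega>(\<phi>(z)) \<le> \<parallel>W\<^sub>\<psi>\<^sub>,\<^sub>\<phi>\<parallel>\<close>,
  and \<open>\<omega>\<^sub>0 \<le> \<omega>\<close> because \<open>\<B>\<^sub>0\<^sub>*(D) \<subseteq> \<B>(D)\<close>. Only \<open>0 \<in> D\<close>, the positivity of \<mu> and the
  boundedness of the operator are needed; where \<open>\<psi>(z) = 0\<close> the value of \<open>\<omega>(\<phi>(z))\<close> is
  irrelevant, which matters because \<open>\<omega>\<close> is a junk supremum wherever the set it is taken
  over is unbounded.\<close>

lemma Qf_const: "Qf D (\<lambda>_. c) = (\<lambda>_. 0)"
proof
  fix z
  obtain u :: "complex^'n" where "norm u = 1"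
    using vector_choose_size zero_le_one by blast
  then have "{cmod (frechet_derivative (\<lambda>_. c) (at z) u) / sqrt (bergman_metric D z u) | u.
      u \<noteq> 0} = {0}"
    by auto
  then show "Qf D (\<lambda>_. c) z = 0"
    unfolding Qf_def by simp
qed

lemma const_in_bloch_space: "(\<lambda>_. c) \<in> bloch_space D"
proof -
  have "holo (\<lambda>_. c) D"
    unfolding holo_def by (auto intro!: exI[of _ "\<lambda>_. 0"])
  then show ?thesis
    unfolding bloch_space_def by (auto simp: Qf_const intro: bdd_aboveI[of _ 0])
qed

lemma const_in_little_bloch_star: "(\<lambda>_. c) \<in> little_bloch_star D"
  unfolding little_bloch_star_def by (simp add: const_in_bloch_space Qf_const tendsto_const)

lemma bloch_norm_const: "D \<noteq> {} \<Longrightarrow> bloch_norm D (\<lambda>_. c) = cmod c"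
  unfolding bloch_norm_def bloch_seminorm_def by (simp add: Qf_const)

lemma omega_le:
  assumes "D \<noteq> {}"
    and "\<And>f. f \<in> bloch_space D \<Longrightarrow> f 0 = 0 \<Longrightarrow> bloch_norm D f \<le> 1 \<Longrightarrow> cmod (f w) \<le> B"
  shows "omega D w \<le> B"
  unfolding omega_def
proof (rule cSup_least)
  show "{cmod (f w) | f. f \<in> bloch_space D \<and> f 0 = 0 \<and> bloch_norm D f \<le> 1} \<noteq> {}"
    using const_in_bloch_space[of 0] bloch_norm_const[OF assms(1), of 0] by fastforce
qed (use assms(2) in blast)

lemma omega0_le_omega:
  assumes "D \<noteq> {}"
    and "\<And>f. f \<in> bloch_space D \<Longrightarrow> f 0 = 0 \<Longrightarrow> bloch_norm D f \<le> 1 \<Longrightarrow> cmod (f w) \<le> B"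
  shows "omega0 D w \<le> omega D w"
  unfolding omega0_def omega_def
proof (rule cSup_subset_mono)
  show "{cmod (f w) | f. f \<in> little_bloch_star D \<and> f 0 = 0 \<and> bloch_norm D f \<le> 1} \<noteq> {}"
    using const_in_little_bloch_star[of 0] bloch_norm_const[OF assms(1), of 0] by fastforce
  show "bdd_above {cmod (f w) | f. f \<in> bloch_space D \<and> f 0 = 0 \<and> bloch_norm D f \<le> 1}"
    using assms(2) by (intro bdd_aboveI) blast
qed (auto simp: little_bloch_star_def)

lemma hinf_norm_upper:
  "bdd_above ((\<lambda>z. \<mu> z * cmod (g z)) ` D) \<Longrightarrow> z \<in> D \<Longrightarrow> \<mu> z * cmod (g z) \<le> hinf_norm D \<mu> g"
  unfolding hinf_norm_def by (rule cSUP_upper2) auto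

lemma wco_norm_upper:
  assumes "D \<noteq> {}" and "\<forall>z\<in>D. 0 \<le> \<mu> z" and "wco_bounded D \<mu> \<psi> \<phi>"
    and "f \<in> bloch_space D" and "bloch_norm D f \<le> 1" and "z \<in> D"
  shows "\<mu> z * cmod (\<psi> z) * cmod (f (\<phi> z)) \<le> wco_norm D \<mu> \<psi> \<phi>"
proof -
  obtain C where C: "\<And>f. f \<in> bloch_space D \<Longrightarrow>
      bdd_above ((\<lambda>z. \<mu> z * cmod (\<psi> z * f (\<phi> z))) ` D) \<and>
      hinf_norm D \<mu> (\<lambda>z. \<psi> z * f (\<phi> z)) \<le> C * bloch_norm D f"
    using assms(3) unfolding wco_bounded_def by meson
  have "C \<ge> 0"
  proof -
    obtain z0 where "z0 \<in> D"
      using assms(1) by blast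
    then have "0 \<le> \<mu> z0 * cmod (\<psi> z0 * 1)"
      using assms(2) by simp
    also have "\<dots> \<le> hinf_norm D \<mu> (\<lambda>z. \<psi> z * 1)"
      using C[OF const_in_bloch_space[of 1]] \<open>z0 \<in> D\<close> hinf_norm_upper[of \<mu> "\<lambda>z. \<psi> z * 1"]
      by blast
    also have "\<dots> \<le> C"
      using C[OF const_in_bloch_space[of 1]] bloch_norm_const[OF assms(1), of 1] by simp
    finally show ?thesis .
  qed
  define T where "T = {hinf_norm D \<mu> (\<lambda>z. \<psi> z * g (\<phi> z)) | g.
    g \<in> bloch_space D \<and> bloch_norm D g \<le> 1}"
  have "bdd_above T"
  proof (rule bdd_aboveI)
    fix x
    assume "x \<in> T"
    then obtain g where "g \<in> bloch_space D" "bloch_norm D g \<le> 1"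
      and x: "x = hinf_norm D \<mu> (\<lambda>z. \<psi> z * g (\<phi> z))"
      unfolding T_def by blast
    then show "x \<le> C"
      using C[of g] \<open>C \<ge> 0\<close> mult_left_le[of "bloch_norm D g" C] by linarith
  qed
  have "\<mu> z * cmod (\<psi> z) * cmod (f (\<phi> z)) = \<mu> z * cmod (\<psi> z * f (\<phi> z))"
    by (simp add: norm_mult)
  also have "\<dots> \<le> hinf_norm D \<mu> (\<lambda>z. \<psi> z * f (\<phi> z))"
    using C[OF assms(4)] assms(6) hinf_norm_upper[of \<mu> "\<lambda>z. \<psi> z * f (\<phi> z)"] by blast
  also have "\<dots> \<le> Sup T"
    using \<open>bdd_above T\<close> assms(4,5) unfolding T_def by (auto intro!: cSup_upper)
  finally show ?thesis
    unfolding wco_norm_def T_def .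
qed

lemma weighted_omega_le_wco_norm:
  assumes "D \<noteq> {}" and "\<forall>z\<in>D. 0 < \<mu> z" and "wco_bounded D \<mu> \<psi> \<phi>" and "z \<in> D"
  shows "\<mu> z * cmod (\<psi> z) * omega D (\<phi> z) \<le> wco_norm D \<mu> \<psi> \<phi>" (is ?omega_bound)
    and "\<mu> z * cmod (\<psi> z) * omega0 D (\<phi> z) \<le> \<mu> z * cmod (\<psi> z) * omega D (\<phi> z)"
      (is ?omega0_bound)
proof -
  have \<mu>_nonneg: "\<forall>z\<in>D. 0 \<le> \<mu> z"
    using assms(2) by (simp add: less_imp_le)
  note upper = wco_norm_upper[OF assms(1) \<mu>_nonneg assms(3) _ _ assms(4)]
  have "?omega_bound \<and> ?omega0_bound"
  proof (cases "\<psi> z = 0")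
    case True
    then show ?thesis
      using upper[OF const_in_bloch_space[of 0]] bloch_norm_const[OF assms(1), of 0] by simp
  next
    case False
    define c where "c = \<mu> z * cmod (\<psi> z)"
    have "c > 0"
      using False assms(2,4) unfolding c_def by simp
    have bound: "cmod (f (\<phi> z)) \<le> wco_norm D \<mu> \<psi> \<phi> / c"
      if "f \<in> bloch_space D" "bloch_norm D f \<le> 1" for f
      using upper[OF that] \<open>c > 0\<close> unfolding c_def by (simp add: pos_le_divide_eq mult.commute)
    have "omega D (\<phi> z) \<le> wco_norm D \<mu> \<psi> \<phi> / c"
      using omega_le[OF assms(1)] bound by blast
    then have "c * omega D (\<phi> z) \<le> wco_norm D \<mu> \<psi> \<phi>"
      using \<open>c > 0\<close> by (simp add: pos_le_divide_eq mult.commute)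
    moreover have "omega0 D (\<phi> z) \<le> omega D (\<phi> z)"
      using omega0_le_omega[OF assms(1)] bound by blast
    then have "c * omega0 D (\<phi> z) \<le> c * omega D (\<phi> z)"
      using \<open>c > 0\<close> by simp
    ultimately show ?thesis
      unfolding c_def by blast
  qed
  then show ?omega_bound and ?omega0_bound
    by blast+
qed

theorem lemma3p1:
  fixes D :: "(complex^'n) set" and \<mu> :: "complex^'n \<Rightarrow> real"
    and \<psi> :: "complex^'n \<Rightarrow> complex" and \<phi> :: "complex^'n \<Rightarrow> complex^'n"
  assumes "bounded D" and "homogeneous_domain D" and "0 \<in> D"
    and "continuous_on D \<mu>" and "\<forall>z\<in>D. \<mu> z > 0"
    and "holo \<psi> D"
    and "holo_map \<phi> D" and "\<phi> ` D \<subseteq> D"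
    and "wco_bounded D \<mu> \<psi> \<phi>"
  shows "bdd_above ((\<lambda>z. \<mu> z * cmod (\<psi> z) * omega D (\<phi> z)) ` D)
    \<and> upsilon0 D \<mu> \<psi> \<phi> \<le> upsilon D \<mu> \<psi> \<phi>
    \<and> upsilon D \<mu> \<psi> \<phi> \<le> wco_norm D \<mu> \<psi> \<phi>"
proof -
  have "D \<noteq> {}"
    using assms(3) by blast
  note pointwise = weighted_omega_le_wco_norm[OF \<open>D \<noteq> {}\<close> assms(5,9)]
  have bdd: "bdd_above ((\<lambda>z. \<mu> z * cmod (\<psi> z) * omega D (\<phi> z)) ` D)"
    using pointwise(1) by (intro bdd_aboveI) auto
  have "upsilon0 D \<mu> \<psi> \<phi> \<le> upsilon D \<mu> \<psi> \<phi>"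
    unfolding upsilon0_def upsilon_def using \<open>D \<noteq> {}\<close> bdd pointwise(2) by (intro cSUP_mono) auto
  moreover have "upsilon D \<mu> \<psi> \<phi> \<le> wco_norm D \<mu> \<psi> \<phi>"
    unfolding upsilon_def using \<open>D \<noteq> {}\<close> pointwise(1) by (rule cSUP_least)
  ultimately show ?thesis
    using bdd by blast
qed

end
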